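(* Let $p$ be a prime and let $G$ be a group of order $p^7$ and nilpotency class $4$ such that $\gamma_2(G)$ is elementary abelian of order $p^5$ (so that $\operatorname{Z}(G) = \gamma_4(G)$ has order $p^2$). Suppose $G = \langle \alpha_1, \alpha_2\rangle$, and put $\beta = [\alpha_1,\alpha_2]$, $\beta_i = [\beta,\alpha_i]$ and $\eta_{ij} = [\beta_i,\alpha_j]$ for $i,j \in \{1,2\}$. Assume that $\gamma_4(G) = \langle \eta_{11}, \eta_{12}\rangle$ and that $\eta_{22} = \eta_{11}^m \eta_{12}^n$ for some $m, n \in \mathbb{F}_p$, not both zero. Then $G$ admits a subgroup $H \leq \operatorname{Z}(G)$ of order $p$ with $|\operatorname{Z}(G/H)| = p^2$ if and only if the equation $m\lambda^2 + n\lambda\mu - \mu^2 = 0$ has a solution $(\lambda,\mu) = (\lambda_0,\mu_0) \in \mathbb{F}_p^2$ with $\lambda_0 \neq 0$.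
   Context: For a group $G$, $[x,y] = x^{-1}y^{-1}xy$; $\gamma_i(G)$ is the $i$-th term of the lower central series and $\operatorname{Z}(G)$ the center. $\mathbb{F}_p$ is the field with $p$ elements; exponents in $\mathbb{F}_p$ are interpreted via integer representatives (well defined since $\gamma_4(G)$ has exponent $p$). *)

theory Defs
  imports "HOL-Algebra.Algebra"
begin

definition grp_comm :: "('a, 'b) monoid_scheme \<Rightarrow> 'a \<Rightarrow> 'a \<Rightarrow> 'a" where
  "grp_comm G x y = inv\<^bsub>G\<^esub> x \<otimes>\<^bsub>G\<^esub> inv\<^bsub>G\<^esub> y \<otimes>\<^bsub>G\<^esub> x \<otimes>\<^bsub>G\<^esub> y"

definition comm_subgroup :: "('a, 'b) monoid_scheme \<Rightarrow> 'a set \<Rightarrow> 'a set \<Rightarrow> 'a set" where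
  "comm_subgroup G A B = generate G {grp_comm G a b | a b. a \<in> A \<and> b \<in> B}"

text \<open>Lower central series, indexed from 1: gamma 1 = G, gamma (i+1) = [gamma i, G].
  (gamma 0 is also set to G, by convention.)\<close>
fun lower_central :: "('a, 'b) monoid_scheme \<Rightarrow> nat \<Rightarrow> 'a set" where
  "lower_central G 0 = carrier G"
| "lower_central G (Suc 0) = carrier G"
| "lower_central G (Suc (Suc i)) = comm_subgroup G (lower_central G (Suc i)) (carrier G)"

definition grp_center :: "('a, 'b) monoid_scheme \<Rightarrow> 'a set" where
  "grp_center G = {z \<in> carrier G. \<forall>g \<in> carrier G. z \<otimes>\<^bsub>G\<^esub> g = g \<otimes>\<^bsub>G\<^esub> z}"

definition nilpotency_class :: "('a, 'b) monoid_scheme \<Rightarrow> nat \<Rightarrow> bool" where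
  "nilpotency_class G c \<longleftrightarrow> lower_central G (Suc c) = {\<one>\<^bsub>G\<^esub>} \<and> lower_central G c \<noteq> {\<one>\<^bsub>G\<^esub>}"

definition elem_abelian :: "('a, 'b) monoid_scheme \<Rightarrow> nat \<Rightarrow> 'a set \<Rightarrow> bool" where
  "elem_abelian G p H \<longleftrightarrow> subgroup H G \<and>
     (\<forall>x \<in> H. \<forall>y \<in> H. x \<otimes>\<^bsub>G\<^esub> y = y \<otimes>\<^bsub>G\<^esub> x) \<and>
     (\<forall>x \<in> H. x [^]\<^bsub>G\<^esub> p = \<one>\<^bsub>G\<^esub>)"

end

theory Submission
  imports Defs "HOL-Number_Theory.Cong"
begin

text \<open>
  The group \<open>Q = \<gamma>\<^sub>2(G)\<close> is an \<open>\<bbbF>\<^sub>p\<close>-vector space with basis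
  \<open>\<beta>, \<beta>\<^sub>1, \<beta>\<^sub>2, \<eta>\<^sub>1\<^sub>1, \<eta>\<^sub>1\<^sub>2\<close>. Since \<open>Q\<close> is abelian, \<open>\<eta>\<^sub>2\<^sub>1 = \<eta>\<^sub>1\<^sub>2\<close>, so in these coordinates
  commutation with \<open>\<alpha>\<^sub>1\<close> and \<open>\<alpha>\<^sub>2\<close> is \<open>(k, i, j, a, b) \<mapsto> (0, k, 0, i, j)\<close> and
  \<open>(k, i, j, a, b) \<mapsto> (0, 0, k, m j, i + n j)\<close>. Every element of \<open>G\<close> is
  \<open>\<alpha>\<^sub>1\<^sup>a \<alpha>\<^sub>2\<^sup>b c\<close> with \<open>c \<in> Q\<close>, and its commutators with \<open>\<alpha>\<^sub>1\<close>, \<open>\<alpha>\<^sub>2\<close> have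
  \<open>\<beta>\<close>-coordinates \<open>-b\<close> and \<open>a\<close>. Hence \<open>Z(G) = \<langle>\<eta>\<^sub>1\<^sub>1, \<eta>\<^sub>1\<^sub>2\<rangle>\<close>, and for a central
  subgroup \<open>H\<close> the preimage of \<open>Z(G/H)\<close>, i.e. the set of \<open>x\<close> with \<open>[x, G] \<subseteq> H\<close>,
  consists of the \<open>(0, i, j, a, b)\<close> such that both \<open>(i, j)\<close> and \<open>(m j, i + n j)\<close> lie
  in \<open>H\<close>, viewed as a line in \<open>\<langle>\<eta>\<^sub>1\<^sub>1, \<eta>\<^sub>1\<^sub>2\<rangle> \<cong> \<bbbF>\<^sub>p\<^sup>2\<close>. Thus \<open>|Z(G/H)| = p\<^sup>2\<close> exactly
  when \<open>H\<close> is spanned by an eigenvector \<open>(i, j)\<close> of \<open>(i, j) \<mapsto> (m j, i + n j)\<close>. Such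
  an eigenvector has \<open>j \<noteq> 0\<close> and satisfies \<open>m j\<^sup>2 - n i j - i\<^sup>2 = 0\<close>, the equation of
  the statement for \<open>(\<lambda>, \<mu>) = (j, -i)\<close>.
\<close>

section \<open>Commutators\<close>

context group
begin

abbreviation comm :: "'a \<Rightarrow> 'a \<Rightarrow> 'a" where
  "comm x y \<equiv> grp_comm G x y"

lemma mult_inv_cancel_left [simp]: "x \<in> carrier G \<Longrightarrow> y \<in> carrier G \<Longrightarrow> x \<otimes> (inv x \<otimes> y) = y"
  by (simp flip: m_assoc)

lemma inv_mult_cancel_left [simp]: "x \<in> carrier G \<Longrightarrow> y \<in> carrier G \<Longrightarrow> inv x \<otimes> (x \<otimes> y) = y"
  by (simp flip: m_assoc)

lemma comm_closed [simp]: "x \<in> carrier G \<Longrightarrow> y \<in> carrier G \<Longrightarrow> comm x y \<in> carrier G"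
  by (simp add: grp_comm_def)

lemma comm_one_left [simp]: "y \<in> carrier G \<Longrightarrow> comm \<one> y = \<one>"
  by (simp add: grp_comm_def m_assoc)

lemma comm_one_right [simp]: "x \<in> carrier G \<Longrightarrow> comm x \<one> = \<one>"
  by (simp add: grp_comm_def m_assoc)

lemma inv_comm: "x \<in> carrier G \<Longrightarrow> y \<in> carrier G \<Longrightarrow> inv (comm x y) = comm y x"
  by (simp add: grp_comm_def m_assoc inv_mult_group)

lemma conj_eq_mult_comm: "x \<in> carrier G \<Longrightarrow> g \<in> carrier G \<Longrightarrow> inv g \<otimes> x \<otimes> g = x \<otimes> comm x g"
  by (simp add: grp_comm_def m_assoc)

lemma mult_eq_mult_comm: "x \<in> carrier G \<Longrightarrow> y \<in> carrier G \<Longrightarrow> x \<otimes> y = y \<otimes> x \<otimes> comm x y"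
  by (simp add: grp_comm_def m_assoc)

lemma comm_mult_left:
  "x \<in> carrier G \<Longrightarrow> y \<in> carrier G \<Longrightarrow> z \<in> carrier G \<Longrightarrow>
   comm (x \<otimes> y) z = (inv y \<otimes> comm x z \<otimes> y) \<otimes> comm y z"
  by (simp add: grp_comm_def m_assoc inv_mult_group)

lemma comm_mult_right:
  "x \<in> carrier G \<Longrightarrow> y \<in> carrier G \<Longrightarrow> z \<in> carrier G \<Longrightarrow>
   comm x (y \<otimes> z) = comm x z \<otimes> (inv z \<otimes> comm x y \<otimes> z)"
  by (simp add: grp_comm_def m_assoc inv_mult_group)

lemma comm_eq_one_iff:
  assumes "x \<in> carrier G" "y \<in> carrier G"
  shows "comm x y = \<one> \<longleftrightarrow> x \<otimes> y = y \<otimes> x"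
proof -
  have "comm x y = inv (y \<otimes> x) \<otimes> (x \<otimes> y)"
    using assms by (simp add: grp_comm_def m_assoc inv_mult_group)
  also have "\<dots> = \<one> \<longleftrightarrow> x \<otimes> y = y \<otimes> x \<otimes> \<one>"
    using assms by (simp only: inv_solve_left' one_closed m_closed)
  finally show ?thesis using assms by simp
qed

lemma comm_self [simp]: "x \<in> carrier G \<Longrightarrow> comm x x = \<one>"
  by (simp add: comm_eq_one_iff)

lemma comm_pow_self [simp]: "x \<in> carrier G \<Longrightarrow> comm (x [^] (k::nat)) x = \<one>"
  by (simp add: comm_eq_one_iff) (metis nat_pow_Suc nat_pow_Suc2)

lemma comm_in_comm_subgroup:
  "a \<in> A \<Longrightarrow> b \<in> B \<Longrightarrow> comm a b \<in> comm_subgroup G A B"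
  unfolding comm_subgroup_def by (rule generate.incl) blast

lemma finite_submonoid_is_subgroup:
  assumes "finite (carrier G)" and "M \<subseteq> carrier G" and "\<one> \<in> M"
    and mult: "\<And>x y. x \<in> M \<Longrightarrow> y \<in> M \<Longrightarrow> x \<otimes> y \<in> M"
  shows "subgroup M G"
proof (rule subgroupI)
  have pow: "x [^] (k::nat) \<in> M" if "x \<in> M" for x k
    using that \<open>\<one> \<in> M\<close> by (induction k) (auto intro: mult)
  fix x assume x: "x \<in> M"
  then have xG: "x \<in> carrier G" using \<open>M \<subseteq> carrier G\<close> by blast
  have "0 < order G"
    using assms(1) by (auto simp: order_def card_gt_0_iff)
  then have "x [^] (order G - 1) \<otimes> x = \<one>"
    using pow_order_eq_1[OF xG] by (metis Suc_diff_1 nat_pow_Suc)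
  then have "inv x = x [^] (order G - 1)"
    using xG by (simp add: inv_equality)
  then show "inv x \<in> M" using pow[OF x] by simp
qed (use assms in auto)

lemma generate_subset_finite_submonoid:
  assumes "finite (carrier G)" and "M \<subseteq> carrier G" and "\<one> \<in> M"
    and "\<And>x y. x \<in> M \<Longrightarrow> y \<in> M \<Longrightarrow> x \<otimes> y \<in> M" and "S \<subseteq> M"
  shows "generate G S \<subseteq> M"
  using generate_subgroup_incl[OF \<open>S \<subseteq> M\<close> finite_submonoid_is_subgroup] assms by blast

lemma subgroup_nat_pow_closed: "subgroup H G \<Longrightarrow> h \<in> H \<Longrightarrow> h [^] (k::nat) \<in> H"
  by (induction k) (simp_all add: subgroup.one_closed subgroup.m_closed)

lemma normalI_generate:
  assumes "finite (carrier G)" and "generate G S = carrier G" and "subgroup N G"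
    and conj: "\<And>s x. s \<in> S \<Longrightarrow> x \<in> N \<Longrightarrow> inv s \<otimes> x \<otimes> s \<in> N"
  shows "N \<lhd> G"
proof (rule normal_invI[OF assms(3)])
  let ?M = "{g \<in> carrier G. \<forall>x \<in> N. inv g \<otimes> x \<otimes> g \<in> N}"
  have NG: "N \<subseteq> carrier G" using subgroup.subset[OF assms(3)] .
  have "generate G S \<subseteq> ?M"
  proof (rule generate_subset_finite_submonoid[OF assms(1)])
    fix g h assume g: "g \<in> ?M" and h: "h \<in> ?M"
    have "inv (g \<otimes> h) \<otimes> x \<otimes> (g \<otimes> h) = inv h \<otimes> (inv g \<otimes> x \<otimes> g) \<otimes> h" if "x \<in> N" for x
      using g h that NG by (auto simp: m_assoc inv_mult_group)
    then show "g \<otimes> h \<in> ?M" using g h by auto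
  next
    have "S \<subseteq> carrier G" using assms(2) generate.incl[of _ S G] by blast
    then show "S \<subseteq> ?M" using conj by blast
  qed (use NG in auto)
  then have "inv (inv x) \<otimes> h \<otimes> inv x \<in> N" if "x \<in> carrier G" "h \<in> N" for x h
    using that assms(2) by auto
  then show "x \<otimes> h \<otimes> inv x \<in> N" if "x \<in> carrier G" "h \<in> N" for x h
    using that by simp
qed

lemma comm_central: "z \<in> grp_center G \<Longrightarrow> g \<in> carrier G \<Longrightarrow> comm z g = \<one>"
  by (simp add: grp_center_def comm_eq_one_iff)

lemma subgroup_grp_center: "subgroup (grp_center G) G"
proof (rule subgroupI)
  fix z assume z: "z \<in> grp_center G"
  have "inv z \<otimes> g = g \<otimes> inv z" if g: "g \<in> carrier G" for g
  proof -
    have zG: "z \<in> carrier G" using z by (simp add: grp_center_def)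
    have "inv z \<otimes> g = inv (inv g \<otimes> z)" using zG g by (simp add: inv_mult_group)
    also have "inv g \<otimes> z = z \<otimes> inv g" using z g by (simp add: grp_center_def)
    also have "inv (z \<otimes> inv g) = g \<otimes> inv z" using zG g by (simp add: inv_mult_group)
    finally show ?thesis .
  qed
  then show "inv z \<in> grp_center G" using z by (simp add: grp_center_def)
next
  fix z w assume z: "z \<in> grp_center G" and w: "w \<in> grp_center G"
  then have zG: "z \<in> carrier G" and wG: "w \<in> carrier G" by (simp_all add: grp_center_def)
  have "z \<otimes> w \<otimes> g = g \<otimes> (z \<otimes> w)" if g: "g \<in> carrier G" for g
  proof -
    have "z \<otimes> w \<otimes> g = z \<otimes> (g \<otimes> w)" using w g zG wG by (simp add: grp_center_def m_assoc)
    also have "\<dots> = g \<otimes> z \<otimes> w" using z g zG wG by (simp add: grp_center_def flip: m_assoc)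
    finally show ?thesis using g zG wG by (simp add: m_assoc)
  qed
  then show "z \<otimes> w \<in> grp_center G" using zG wG by (simp add: grp_center_def)
qed (auto simp: grp_center_def intro!: exI[of _ \<one>])

end

section \<open>The centre of a quotient group\<close>

definition (in group) center_preimage :: "'a set \<Rightarrow> 'a set" where
  "center_preimage H = {x \<in> carrier G. \<forall>y \<in> carrier G. comm x y \<in> H}"

lemma (in group) central_subgroup_normal:
  assumes "subgroup H G" and "H \<subseteq> grp_center G"
  shows "H \<lhd> G"
  unfolding normal_inv_iff
proof (intro conjI assms ballI)
  fix x h assume x: "x \<in> carrier G" and h: "h \<in> H"
  then have "x \<otimes> h = h \<otimes> x" using assms(2) by (auto simp: grp_center_def)
  then show "x \<otimes> h \<otimes> inv x \<in> H"
    using x h subgroup.mem_carrier[OF assms(1)] by (simp add: m_assoc)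
qed

context normal
begin

lemma rcos_eq_iff_inv_mult:
  assumes a: "a \<in> carrier G" and b: "b \<in> carrier G"
  shows "H #> a = H #> b \<longleftrightarrow> inv b \<otimes> a \<in> H"
proof -
  have "H #> a = H #> b \<longleftrightarrow> a \<in> H #> b"
    using rcos_self[OF a is_subgroup] repr_independence[OF _ b is_subgroup] by metis
  also have "\<dots> \<longleftrightarrow> a \<otimes> inv b \<in> H"
    using rcos_module[OF is_group b a] .
  also have "\<dots> \<longleftrightarrow> inv b \<otimes> a \<in> H"
  proof
    assume "a \<otimes> inv b \<in> H"
    from inv_op_closed1[OF b this] show "inv b \<otimes> a \<in> H" using a b by (simp add: m_assoc)
  next
    assume "inv b \<otimes> a \<in> H"
    from inv_op_closed2[OF b this] show "a \<otimes> inv b \<in> H" using a b by (simp flip: m_assoc)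
  qed
  finally show ?thesis .
qed

lemma rcos_in_grp_center_FactGroup_iff:
  assumes "x \<in> carrier G"
  shows "H #> x \<in> grp_center (G Mod H) \<longleftrightarrow> x \<in> center_preimage H"
proof -
  have "rcosets H = (\<lambda>y. H #> y) ` carrier G" by (auto simp: RCOSETS_def)
  then have "H #> x \<in> grp_center (G Mod H) \<longleftrightarrow> (\<forall>y \<in> carrier G. H #> (x \<otimes> y) = H #> (y \<otimes> x))"
    using assms by (simp add: grp_center_def FactGroup_def rcos_sum)
  also have "\<dots> \<longleftrightarrow> (\<forall>y \<in> carrier G. comm x y \<in> H)"
    using assms by (simp add: rcos_eq_iff_inv_mult grp_comm_def inv_mult_group m_assoc)
  finally show ?thesis using assms by (simp add: center_preimage_def)
qed

lemma grp_center_FactGroup: "grp_center (G Mod H) = (\<lambda>x. H #> x) ` center_preimage H"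
proof
  show "grp_center (G Mod H) \<subseteq> (\<lambda>x. H #> x) ` center_preimage H"
  proof
    fix Y assume Y: "Y \<in> grp_center (G Mod H)"
    then obtain x where "x \<in> carrier G" and "Y = H #> x"
      by (auto simp: grp_center_def FactGroup_def RCOSETS_def)
    then show "Y \<in> (\<lambda>x. H #> x) ` center_preimage H"
      using Y rcos_in_grp_center_FactGroup_iff by blast
  qed
  show "(\<lambda>x. H #> x) ` center_preimage H \<subseteq> grp_center (G Mod H)"
    using rcos_in_grp_center_FactGroup_iff by (auto simp: center_preimage_def)
qed

lemma subset_center_preimage: "H \<subseteq> center_preimage H"
proof
  fix h assume h: "h \<in> H"
  then have hG: "h \<in> carrier G" by simp
  have "comm h y \<in> H" if y: "y \<in> carrier G" for y
  proof -
    have "comm h y = inv h \<otimes> (inv y \<otimes> h \<otimes> y)"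
      using hG y by (simp add: grp_comm_def m_assoc)
    then show ?thesis using h y by (simp add: inv_op_closed1)
  qed
  then show "h \<in> center_preimage H" using hG by (simp add: center_preimage_def)
qed

lemma subgroup_center_preimage: "subgroup (center_preimage H) G"
proof (rule subgroupI)
  show "center_preimage H \<subseteq> carrier G" by (auto simp: center_preimage_def)
  show "center_preimage H \<noteq> {}"
    using subset_center_preimage subgroup.one_closed[OF is_subgroup] by blast
next
  fix x assume x: "x \<in> center_preimage H"
  then have xG: "x \<in> carrier G" by (simp add: center_preimage_def)
  have "comm (inv x) y \<in> H" if y: "y \<in> carrier G" for y
  proof -
    define c where "c = x \<otimes> comm x y \<otimes> inv x"
    have cH: "c \<in> H"
      unfolding c_def using x y xG by (simp add: center_preimage_def inv_op_closed2)
    have "comm (x \<otimes> inv x) y = c \<otimes> comm (inv x) y"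
      unfolding c_def using comm_mult_left[OF xG inv_closed[OF xG] y] xG by simp
    then have "c \<otimes> comm (inv x) y = \<one>" using xG y by simp
    moreover have cG: "c \<in> carrier G" using cH by simp
    ultimately have "comm (inv x) y = inv c"
      using xG y by (metis comm_closed inv_closed inv_mult_cancel_left r_one)
    then show ?thesis using subgroup.m_inv_closed[OF is_subgroup cH] by simp
  qed
  then show "inv x \<in> center_preimage H" using xG by (simp add: center_preimage_def)
next
  fix x z assume x: "x \<in> center_preimage H" and z: "z \<in> center_preimage H"
  then have G: "x \<in> carrier G" "z \<in> carrier G" by (simp_all add: center_preimage_def)
  have "comm (x \<otimes> z) y \<in> H" if y: "y \<in> carrier G" for y
  proof -
    have "comm x y \<in> H" "comm z y \<in> H" using x z y by (simp_all add: center_preimage_def)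
    then have "(inv z \<otimes> comm x y \<otimes> z) \<otimes> comm z y \<in> H"
      by (intro subgroup.m_closed[OF is_subgroup] inv_op_closed1[OF G(2)])
    then show ?thesis using comm_mult_left[OF G y] by simp
  qed
  then show "x \<otimes> z \<in> center_preimage H" using G by (simp add: center_preimage_def)
qed

lemma card_grp_center_FactGroup:
  assumes "finite (carrier G)"
  shows "card (grp_center (G Mod H)) * card H = card (center_preimage H)"
proof -
  let ?P = "G\<lparr>carrier := center_preimage H\<rparr>"
  interpret P: group ?P
    using subgroup_imp_group[OF subgroup_center_preimage] .
  have "subgroup H ?P"
    using subgroup_incl[OF is_subgroup subgroup_center_preimage subset_center_preimage] .
  then have "card (rcosets\<^bsub>?P\<^esub> H) * card H = card (center_preimage H)"
    using P.lagrange by (simp add: order_def)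
  moreover have "rcosets\<^bsub>?P\<^esub> H = (\<lambda>x. H #> x) ` center_preimage H"
    unfolding RCOSETS_def r_coset_def by auto
  ultimately show ?thesis by (simp add: grp_center_FactGroup)
qed

lemma center_preimageI:
  assumes "finite (carrier G)" and "generate G S = carrier G" and "x \<in> carrier G"
    and "\<And>s. s \<in> S \<Longrightarrow> comm x s \<in> H"
  shows "x \<in> center_preimage H"
proof -
  have "generate G S \<subseteq> {y \<in> carrier G. comm x y \<in> H}"
  proof (rule generate_subset_finite_submonoid[OF assms(1)])
    fix y z assume "y \<in> {y \<in> carrier G. comm x y \<in> H}" "z \<in> {y \<in> carrier G. comm x y \<in> H}"
    then show "y \<otimes> z \<in> {y \<in> carrier G. comm x y \<in> H}"
      using comm_mult_right[OF assms(3)]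
      by (auto intro!: subgroup.m_closed[OF is_subgroup] inv_op_closed1)
  next
    show "S \<subseteq> {y \<in> carrier G. comm x y \<in> H}"
      using assms(2,4) generate.incl[of _ S G] by blast
  qed (use assms(3) in auto)
  then show ?thesis using assms(2,3) by (auto simp: center_preimage_def)
qed

lemma center_preimage_eq_carrier:
  assumes "finite (carrier G)" and "generate G S = carrier G"
    and "\<And>s t. s \<in> S \<Longrightarrow> t \<in> S \<Longrightarrow> comm s t \<in> H"
  shows "center_preimage H = carrier G"
proof
  have "S \<subseteq> carrier G" using assms(2) generate.incl[of _ S G] by blast
  then have "S \<subseteq> center_preimage H"
    using center_preimageI[OF assms(1,2)] assms(3) by (meson subsetI subsetD)
  then have "generate G S \<subseteq> center_preimage H"
    by (rule generate_subgroup_incl[OF _ subgroup_center_preimage])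
  then show "carrier G \<subseteq> center_preimage H" using assms(2) by simp
qed (auto simp: center_preimage_def)

end

section \<open>Metabelian groups\<close>

locale metabelian = group G for G (structure) +
  fixes A :: "'a set"
  assumes subgroup_A: "subgroup A G"
    and A_commute: "x \<in> A \<Longrightarrow> y \<in> A \<Longrightarrow> x \<otimes> y = y \<otimes> x"
    and comm_in_A: "x \<in> carrier G \<Longrightarrow> y \<in> carrier G \<Longrightarrow> comm x y \<in> A"
begin

lemma A_carrier: "x \<in> A \<Longrightarrow> x \<in> carrier G"
  using subgroup.mem_carrier[OF subgroup_A] .

lemma A_mult: "x \<in> A \<Longrightarrow> y \<in> A \<Longrightarrow> x \<otimes> y \<in> A"
  using subgroup.m_closed[OF subgroup_A] .

lemma A_pow: "x \<in> A \<Longrightarrow> x [^] (k::nat) \<in> A"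
  using subgroup_nat_pow_closed[OF subgroup_A] .

lemma A_mult_mult_swap:
  "x \<in> A \<Longrightarrow> y \<in> A \<Longrightarrow> x' \<in> A \<Longrightarrow> y' \<in> A \<Longrightarrow> (x \<otimes> y) \<otimes> (x' \<otimes> y') = (x \<otimes> x') \<otimes> (y \<otimes> y')"
  by (simp add: A_carrier m_assoc) (metis A_carrier A_commute m_assoc)

lemma conj_in_A: "c \<in> A \<Longrightarrow> g \<in> carrier G \<Longrightarrow> inv g \<otimes> c \<otimes> g \<in> A"
  by (simp add: conj_eq_mult_comm A_carrier A_mult comm_in_A)

lemma conj_A_by_A: "c \<in> A \<Longrightarrow> d \<in> A \<Longrightarrow> inv d \<otimes> c \<otimes> d = c"
  by (simp add: A_carrier m_assoc A_commute[of c d])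

lemma comm_mult_A:
  assumes "x \<in> carrier G" and "c \<in> A" and "g \<in> carrier G"
  shows "comm (x \<otimes> c) g = comm x g \<otimes> comm c g"
  using comm_mult_left[OF assms(1) A_carrier[OF assms(2)] assms(3)]
    conj_A_by_A[OF comm_in_A[OF assms(1,3)] assms(2)] by simp

lemma comm_pow_A: "c \<in> A \<Longrightarrow> g \<in> carrier G \<Longrightarrow> comm (c [^] (k::nat)) g = comm c g [^] k"
  by (induction k) (simp_all add: A_carrier A_pow comm_mult_A nat_pow_Suc)

lemma conj_by_mult_A:
  assumes c: "c \<in> A" and u: "u \<in> carrier G" and v: "v \<in> carrier G"
  shows "inv (u \<otimes> v) \<otimes> c \<otimes> (u \<otimes> v) = c \<otimes> (comm c v \<otimes> (comm c u \<otimes> comm (comm c u) v))"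
proof -
  have cG: "c \<in> carrier G" using A_carrier[OF c] .
  have "inv (u \<otimes> v) \<otimes> c \<otimes> (u \<otimes> v) = inv v \<otimes> (inv u \<otimes> c \<otimes> u) \<otimes> v"
    using cG u v by (simp add: m_assoc inv_mult_group)
  also have "\<dots> = (inv v \<otimes> c \<otimes> v) \<otimes> (inv v \<otimes> comm c u \<otimes> v)"
    using cG u v by (simp only: conj_eq_mult_comm[OF cG u]) (simp add: m_assoc)
  also have "\<dots> = c \<otimes> (comm c v \<otimes> (comm c u \<otimes> comm (comm c u) v))"
    using cG u v by (simp only: conj_eq_mult_comm comm_closed) (simp add: m_assoc)
  finally show ?thesis .
qed

text \<open>Conjugation on the abelian normal subgroup \<open>A\<close> factors through \<open>G/A\<close>,
  so conjugating by \<open>uv\<close> and by \<open>vu\<close> agree; expanding both sides leaves the two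
  double commutators.\<close>
lemma comm_comm_swap:
  assumes c: "c \<in> A" and x: "x \<in> carrier G" and y: "y \<in> carrier G"
  shows "comm (comm c x) y = comm (comm c y) x"
proof -
  have cG: "c \<in> carrier G" using A_carrier[OF c] .
  define cx cy where "cx = comm c x" and "cy = comm c y"
  have A: "cx \<in> A" "cy \<in> A" "comm cx y \<in> A" "comm cy x \<in> A"
    unfolding cx_def cy_def using cG x y by (simp_all add: comm_in_A)
  have "inv (x \<otimes> y) \<otimes> c \<otimes> (x \<otimes> y) = inv (y \<otimes> x) \<otimes> c \<otimes> (y \<otimes> x)"
  proof -
    have "inv (x \<otimes> y) \<otimes> c \<otimes> (x \<otimes> y)
        = inv (comm x y) \<otimes> (inv (y \<otimes> x) \<otimes> c \<otimes> (y \<otimes> x)) \<otimes> comm x y"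
      using x y cG by (simp add: mult_eq_mult_comm[OF x y] m_assoc inv_mult_group)
    then show ?thesis
      using conj_A_by_A[OF conj_in_A[OF c] comm_in_A[OF x y]] x y by simp
  qed
  then have "c \<otimes> (cy \<otimes> (cx \<otimes> comm cx y)) = c \<otimes> (cx \<otimes> (cy \<otimes> comm cy x))"
    unfolding cx_def cy_def using conj_by_mult_A c x y by simp
  also have "cx \<otimes> (cy \<otimes> comm cy x) = cy \<otimes> (cx \<otimes> comm cy x)"
    using A A_carrier by (simp flip: m_assoc add: A_commute[of cx cy])
  finally have "comm cx y = comm cy x"
    using A A_carrier cG by (simp add: l_cancel)
  then show ?thesis unfolding cx_def cy_def .
qed

end

section \<open>Invariant lines modulo a prime\<close>

lemma int_eigenvector_imp_quadratic:
  fixes p m n c i j :: int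
  assumes "[m * j = c * i] (mod p)" and "[i + n * j = c * j] (mod p)"
  shows "[m * j\<^sup>2 - n * j * i - i\<^sup>2 = 0] (mod p)"
proof -
  have "m * j\<^sup>2 - n * j * i - i\<^sup>2 = j * (m * j - c * i) - i * (i + n * j - c * j)"
    by (simp add: algebra_simps power2_eq_square)
  moreover have "p dvd j * (m * j - c * i) - i * (i + n * j - c * j)"
    using assms by (simp add: cong_iff_dvd_diff)
  ultimately show ?thesis by (simp add: cong_0_iff)
qed

lemma int_quadratic_imp_eigenvector:
  fixes p m n i j :: int
  assumes p: "Factorial_Ring.prime p" and j: "\<not> p dvd j" and q: "[m * j\<^sup>2 - n * j * i - i\<^sup>2 = 0] (mod p)"
  obtains c where "[m * j = c * i] (mod p)" and "[i + n * j = c * j] (mod p)"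
proof -
  have "coprime j p" using prime_imp_coprime[OF p j] by (simp add: coprime_commute)
  then obtain x where x: "[j * x = 1] (mod p)" using cong_solve_coprime_int by blast
  define c where "c = (i + n * j) * x"
  have "[c * j = (i + n * j) * 1] (mod p)"
    unfolding c_def using cong_scalar_left[OF x, of "i + n * j"] by (simp add: ac_simps)
  then have cj: "p dvd c * j - (i + n * j)" by (simp add: cong_iff_dvd_diff)
  have "j * (m * j - c * i) = (m * j\<^sup>2 - n * j * i - i\<^sup>2) - i * (c * j - (i + n * j))"
    by (simp add: algebra_simps power2_eq_square)
  then have "p dvd j * (m * j - c * i)" using q cj by (simp add: cong_0_iff)
  then have "p dvd m * j - c * i" using p j prime_dvd_mult_iff by blast
  then show ?thesis
    using that cj by (simp add: cong_iff_dvd_diff dvd_diff_commute)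
qed

definition cong_eigenvector :: "nat \<Rightarrow> nat \<Rightarrow> nat \<Rightarrow> nat \<Rightarrow> nat \<Rightarrow> bool" where
  "cong_eigenvector p m n i j \<longleftrightarrow> (\<exists>c. [m * j = c * i] (mod p) \<and> [i + n * j = c * j] (mod p))"

lemma cong_eigenvector_iff_quadratic:
  assumes p: "Factorial_Ring.prime p" and j: "\<not> p dvd j"
  shows "cong_eigenvector p m n i j \<longleftrightarrow>
         [int m * (int j)\<^sup>2 - int n * int j * int i - (int i)\<^sup>2 = 0] (mod int p)"
proof
  assume "cong_eigenvector p m n i j"
  then obtain c where "[m * j = c * i] (mod p)" "[i + n * j = c * j] (mod p)"
    by (auto simp: cong_eigenvector_def)
  then have "[int m * int j = int c * int i] (mod int p)"
    and "[int i + int n * int j = int c * int j] (mod int p)"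
    by (simp_all flip: cong_int_iff)
  then show "[int m * (int j)\<^sup>2 - int n * int j * int i - (int i)\<^sup>2 = 0] (mod int p)"
    by (rule int_eigenvector_imp_quadratic)
next
  assume q: "[int m * (int j)\<^sup>2 - int n * int j * int i - (int i)\<^sup>2 = 0] (mod int p)"
  have "Factorial_Ring.prime (int p)" and "\<not> int p dvd int j" using p j by simp_all
  then obtain c where c: "[int m * int j = c * int i] (mod int p)"
    "[int i + int n * int j = c * int j] (mod int p)"
    using q by (rule int_quadratic_imp_eigenvector)
  define c' where "c' = nat (c mod int p)"
  have "[c = int c'] (mod int p)"
    using p by (simp add: c'_def cong_def prime_gt_0_nat)
  then have "[int m * int j = int c' * int i] (mod int p)"
    and "[int i + int n * int j = int c' * int j] (mod int p)"
    using c by (auto intro: cong_trans cong_mult cong_refl)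
  then have "[m * j = c' * i] (mod p)" and "[i + n * j = c' * j] (mod p)"
    by (simp_all flip: cong_int_iff)
  then show "cong_eigenvector p m n i j" by (auto simp: cong_eigenvector_def)
qed

lemma cong_eigenvector_dvd_fst:
  assumes "cong_eigenvector p m n i j" and "p dvd j"
  shows "p dvd i"
proof -
  obtain c where "[i + n * j = c * j] (mod p)" using assms(1) by (auto simp: cong_eigenvector_def)
  moreover have "[c * j = 0] (mod p)" using assms(2) by (simp add: cong_0_iff)
  ultimately have "p dvd i + n * j" using cong_trans cong_0_iff by blast
  then show ?thesis using assms(2) by (simp add: dvd_add_left_iff)
qed

lemma quadratic_cong_subst:
  fixes p m n l u i j :: int
  assumes "[l = j] (mod p)" and "[u = - i] (mod p)"
  shows "[m * l\<^sup>2 + n * l * u - u\<^sup>2 = m * j\<^sup>2 - n * j * i - i\<^sup>2] (mod p)"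
proof -
  have "[m * l\<^sup>2 + n * l * u - u\<^sup>2 = m * j\<^sup>2 + n * j * (- i) - (- i)\<^sup>2] (mod p)"
    using assms by (intro cong_add cong_diff cong_mult cong_pow cong_refl)
  then show ?thesis by simp
qed

lemma exists_quadratic_root_iff:
  fixes p m n :: nat
  assumes "0 < p"
  shows "(\<exists>l u :: int. 0 < l \<and> l < int p \<and> 0 \<le> u \<and> u < int p \<and>
            (int m * l ^ 2 + int n * l * u - u ^ 2) mod int p = 0)
     \<longleftrightarrow> (\<exists>i j. \<not> p dvd j \<and> [int m * (int j)\<^sup>2 - int n * int j * int i - (int i)\<^sup>2 = 0] (mod int p))"
proof
  assume "\<exists>l u :: int. 0 < l \<and> l < int p \<and> 0 \<le> u \<and> u < int p \<and>
            (int m * l ^ 2 + int n * l * u - u ^ 2) mod int p = 0"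
  then obtain l u :: int where lu: "0 < l" "l < int p"
    and root: "[int m * l\<^sup>2 + int n * l * u - u\<^sup>2 = 0] (mod int p)"
    by (auto simp: cong_0_iff)
  define i j where "i = nat ((- u) mod int p)" and "j = nat l"
  have "[l = int j] (mod int p)" and "[u = - int i] (mod int p)"
    using assms lu by (simp_all add: i_def j_def cong_def mod_minus_eq)
  from quadratic_cong_subst[OF this, of "int m" "int n"]
  have "[int m * (int j)\<^sup>2 - int n * int j * int i - (int i)\<^sup>2 = 0] (mod int p)"
    using root by (metis cong_sym cong_trans)
  moreover have "\<not> p dvd j" using lu by (auto simp: j_def dest: dvd_imp_le)
  ultimately show "\<exists>i j. \<not> p dvd j \<and> [int m * (int j)\<^sup>2 - int n * int j * int i - (int i)\<^sup>2 = 0] (mod int p)"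
    by blast
next
  assume "\<exists>i j. \<not> p dvd j \<and> [int m * (int j)\<^sup>2 - int n * int j * int i - (int i)\<^sup>2 = 0] (mod int p)"
  then obtain i j where j: "\<not> p dvd j"
    and root: "[int m * (int j)\<^sup>2 - int n * int j * int i - (int i)\<^sup>2 = 0] (mod int p)"
    by blast
  define l u where "l = int (j mod p)" and "u = (- int i) mod int p"
  have "[l = int j] (mod int p)" and "[u = - int i] (mod int p)"
    by (simp_all add: l_def u_def cong_def zmod_int)
  from quadratic_cong_subst[OF this, of "int m" "int n"]
  have "[int m * l\<^sup>2 + int n * l * u - u\<^sup>2 = 0] (mod int p)"
    using root by (rule cong_trans)
  moreover have "0 < l" "l < int p" "0 \<le> u" "u < int p"
    using assms j by (auto simp: l_def u_def dvd_eq_mod_eq_0)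
  ultimately show "\<exists>l u :: int. 0 < l \<and> l < int p \<and> 0 \<le> u \<and> u < int p \<and>
            (int m * l ^ 2 + int n * l * u - u ^ 2) mod int p = 0"
    unfolding cong_def by (intro exI[of _ l] exI[of _ u]) simp
qed

section \<open>Two-generator groups of order \<open>p\<^sup>7\<close> and class 4\<close>

locale class4_p7_group = group G for G (structure) +
  fixes p :: nat and \<alpha>\<^sub>1 \<alpha>\<^sub>2 :: 'a and m n :: nat
  assumes prime_p: "Factorial_Ring.prime p"
    and finite_G: "finite (carrier G)"
    and card_G: "card (carrier G) = p ^ 7"
    and lower_central_5: "lower_central G 5 = {\<one>}"
    and elem_abelian_\<gamma>\<^sub>2: "elem_abelian G p (lower_central G 2)"
    and card_\<gamma>\<^sub>2: "card (lower_central G 2) = p ^ 5"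
    and \<alpha>\<^sub>1: "\<alpha>\<^sub>1 \<in> carrier G" and \<alpha>\<^sub>2: "\<alpha>\<^sub>2 \<in> carrier G"
    and generate_\<alpha>: "generate G {\<alpha>\<^sub>1, \<alpha>\<^sub>2} = carrier G"
    and lower_central_4: "lower_central G 4 =
           generate G {grp_comm G (grp_comm G (grp_comm G \<alpha>\<^sub>1 \<alpha>\<^sub>2) \<alpha>\<^sub>1) \<alpha>\<^sub>1,
                       grp_comm G (grp_comm G (grp_comm G \<alpha>\<^sub>1 \<alpha>\<^sub>2) \<alpha>\<^sub>1) \<alpha>\<^sub>2}"
    and \<eta>\<^sub>2\<^sub>2_eq: "grp_comm G (grp_comm G (grp_comm G \<alpha>\<^sub>1 \<alpha>\<^sub>2) \<alpha>\<^sub>2) \<alpha>\<^sub>2 =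
           grp_comm G (grp_comm G (grp_comm G \<alpha>\<^sub>1 \<alpha>\<^sub>2) \<alpha>\<^sub>1) \<alpha>\<^sub>1 [^] m \<otimes>
           grp_comm G (grp_comm G (grp_comm G \<alpha>\<^sub>1 \<alpha>\<^sub>2) \<alpha>\<^sub>1) \<alpha>\<^sub>2 [^] n"
begin

abbreviation "\<gamma>\<^sub>2 \<equiv> lower_central G 2"
abbreviation "\<beta> \<equiv> comm \<alpha>\<^sub>1 \<alpha>\<^sub>2"
abbreviation "\<beta>\<^sub>1 \<equiv> comm \<beta> \<alpha>\<^sub>1"
abbreviation "\<beta>\<^sub>2 \<equiv> comm \<beta> \<alpha>\<^sub>2"
abbreviation "\<eta>\<^sub>1\<^sub>1 \<equiv> comm \<beta>\<^sub>1 \<alpha>\<^sub>1"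
abbreviation "\<eta>\<^sub>1\<^sub>2 \<equiv> comm \<beta>\<^sub>1 \<alpha>\<^sub>2"
abbreviation "\<eta>\<^sub>2\<^sub>1 \<equiv> comm \<beta>\<^sub>2 \<alpha>\<^sub>1"
abbreviation "\<eta>\<^sub>2\<^sub>2 \<equiv> comm \<beta>\<^sub>2 \<alpha>\<^sub>2"

lemma \<gamma>\<^sub>2_eq: "\<gamma>\<^sub>2 = comm_subgroup G (carrier G) (carrier G)"
  by (simp add: numeral_2_eq_2)

(* otherwise simp unfolds \<gamma>\<^sub>2 into an iterated comm_subgroup *)
declare lower_central.simps [simp del]

sublocale metabelian G \<gamma>\<^sub>2
proof (intro metabelian.intro metabelian_axioms.intro is_group)
  show "subgroup \<gamma>\<^sub>2 G" "\<And>x y. x \<in> \<gamma>\<^sub>2 \<Longrightarrow> y \<in> \<gamma>\<^sub>2 \<Longrightarrow> x \<otimes> y = y \<otimes> x"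
    using elem_abelian_\<gamma>\<^sub>2 by (simp_all add: elem_abelian_def)
  show "\<And>x y. x \<in> carrier G \<Longrightarrow> y \<in> carrier G \<Longrightarrow> comm x y \<in> \<gamma>\<^sub>2"
    unfolding \<gamma>\<^sub>2_eq by (rule comm_in_comm_subgroup)
qed

lemma p_gt_1: "1 < p"
  using prime_p prime_gt_1_nat by blast

lemma coprime_p_minus_1: "coprime (p - 1) p"
  using coprime_diff_one_left_nat[of p] p_gt_1 by simp

lemma \<gamma>\<^sub>2_pow_cong:
  assumes "x \<in> \<gamma>\<^sub>2" and "[k = k'] (mod p)"
  shows "x [^] k = x [^] k'"
proof -
  have mod: "x [^] k = x [^] (k mod p)" for k
  proof -
    have "x [^] p = \<one>" using assms(1) elem_abelian_\<gamma>\<^sub>2 by (simp add: elem_abelian_def)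
    then have "x [^] (p * (k div p)) = \<one>" using assms(1) A_carrier by (simp add: nat_pow_pow [symmetric])
    then show ?thesis
      using assms(1) A_carrier nat_pow_mult[of x "p * (k div p)" "k mod p"] by simp
  qed
  show ?thesis using mod[of k] mod[of k'] assms(2) by (simp add: cong_def)
qed

lemma lower_central_4_subset_center: "lower_central G 4 \<subseteq> grp_center G"
proof
  fix z assume z: "z \<in> lower_central G 4"
  have zG: "z \<in> carrier G"
    using z generate_incl[of "{\<eta>\<^sub>1\<^sub>1, \<eta>\<^sub>1\<^sub>2}"] \<alpha>\<^sub>1 \<alpha>\<^sub>2 by (auto simp: lower_central_4)
  have "comm z g = \<one>" if "g \<in> carrier G" for g
  proof -
    have "lower_central G 5 = comm_subgroup G (lower_central G 4) (carrier G)"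
      by (simp add: numeral_eq_Suc lower_central.simps)
    then have "comm z g \<in> lower_central G 5" using comm_in_comm_subgroup[OF z that] by simp
    then show ?thesis using lower_central_5 by simp
  qed
  then show "z \<in> grp_center G" using zG by (simp add: grp_center_def comm_eq_one_iff)
qed

lemma \<eta>\<^sub>1\<^sub>1_central: "\<eta>\<^sub>1\<^sub>1 \<in> grp_center G" and \<eta>\<^sub>1\<^sub>2_central: "\<eta>\<^sub>1\<^sub>2 \<in> grp_center G"
  using lower_central_4_subset_center by (auto simp: lower_central_4 intro: generate.incl)

lemma \<eta>\<^sub>2\<^sub>1_eq: "\<eta>\<^sub>2\<^sub>1 = \<eta>\<^sub>1\<^sub>2"
  using comm_comm_swap[OF comm_in_A[OF \<alpha>\<^sub>1 \<alpha>\<^sub>2] \<alpha>\<^sub>2 \<alpha>\<^sub>1] by simp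


lemma basis_in_\<gamma>\<^sub>2: "\<beta> \<in> \<gamma>\<^sub>2" "\<beta>\<^sub>1 \<in> \<gamma>\<^sub>2" "\<beta>\<^sub>2 \<in> \<gamma>\<^sub>2" "\<eta>\<^sub>1\<^sub>1 \<in> \<gamma>\<^sub>2" "\<eta>\<^sub>1\<^sub>2 \<in> \<gamma>\<^sub>2"
  by (simp_all add: comm_in_A \<alpha>\<^sub>1 \<alpha>\<^sub>2)

definition from_coords :: "nat \<Rightarrow> nat \<Rightarrow> nat \<Rightarrow> nat \<Rightarrow> nat \<Rightarrow> 'a" where
  "from_coords k i j a b = \<beta> [^] k \<otimes> (\<beta>\<^sub>1 [^] i \<otimes> (\<beta>\<^sub>2 [^] j \<otimes> (\<eta>\<^sub>1\<^sub>1 [^] a \<otimes> \<eta>\<^sub>1\<^sub>2 [^] b)))"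

lemma from_coords_in_\<gamma>\<^sub>2 [simp]: "from_coords k i j a b \<in> \<gamma>\<^sub>2"
  unfolding from_coords_def by (intro A_mult A_pow basis_in_\<gamma>\<^sub>2)

lemma from_coords_closed [simp]: "from_coords k i j a b \<in> carrier G"
  using A_carrier by simp

lemma from_coords_mult:
  "from_coords k i j a b \<otimes> from_coords k' i' j' a' b' =
   from_coords (k + k') (i + i') (j + j') (a + a') (b + b')"
  unfolding from_coords_def
  using basis_in_\<gamma>\<^sub>2 A_carrier by (simp add: A_mult_mult_swap A_mult A_pow nat_pow_mult)

lemma from_coords_zero [simp]: "from_coords 0 0 0 0 0 = \<one>"
  by (simp add: from_coords_def)

lemma from_coords_pow:
  "from_coords k i j a b [^] (c::nat) = from_coords (c * k) (c * i) (c * j) (c * a) (c * b)"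
  by (induction c) (simp_all add: from_coords_mult add.commute)

lemma from_coords_cong:
  assumes "[k = k'] (mod p)" "[i = i'] (mod p)" "[j = j'] (mod p)" "[a = a'] (mod p)" "[b = b'] (mod p)"
  shows "from_coords k i j a b = from_coords k' i' j' a' b'"
  unfolding from_coords_def
  using \<gamma>\<^sub>2_pow_cong[OF basis_in_\<gamma>\<^sub>2(1) assms(1)] \<gamma>\<^sub>2_pow_cong[OF basis_in_\<gamma>\<^sub>2(2) assms(2)]
    \<gamma>\<^sub>2_pow_cong[OF basis_in_\<gamma>\<^sub>2(3) assms(3)] \<gamma>\<^sub>2_pow_cong[OF basis_in_\<gamma>\<^sub>2(4) assms(4)]
    \<gamma>\<^sub>2_pow_cong[OF basis_in_\<gamma>\<^sub>2(5) assms(5)]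
  by (simp only:)

lemma from_coords_mod:
  "from_coords k i j a b = from_coords (k mod p) (i mod p) (j mod p) (a mod p) (b mod p)"
  by (rule from_coords_cong) (simp_all add: cong_def)

lemma inv_from_coords:
  "inv (from_coords k i j a b) = from_coords ((p - 1) * k) ((p - 1) * i) ((p - 1) * j) ((p - 1) * a) ((p - 1) * b)"
proof (rule inv_equality)
  have "[(p - 1) * x + x = 0] (mod p)" for x
    using p_gt_1 by (simp add: cong_0_iff algebra_simps)
  then show "from_coords ((p - 1) * k) ((p - 1) * i) ((p - 1) * j) ((p - 1) * a) ((p - 1) * b)
      \<otimes> from_coords k i j a b = \<one>"
    unfolding from_coords_mult by (subst from_coords_cong[of _ 0 _ 0 _ 0 _ 0 _ 0]) simp_all
qed simp_all

lemma basis_from_coords: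
  "\<beta> [^] k = from_coords k 0 0 0 0" "\<beta>\<^sub>1 [^] k = from_coords 0 k 0 0 0"
  "\<beta>\<^sub>2 [^] k = from_coords 0 0 k 0 0" "\<eta>\<^sub>1\<^sub>1 [^] k = from_coords 0 0 0 k 0"
  "\<eta>\<^sub>1\<^sub>2 [^] k = from_coords 0 0 0 0 k"
  using basis_in_\<gamma>\<^sub>2 by (simp_all add: from_coords_def A_carrier)

lemma comm_from_coords_\<alpha>\<^sub>1: "comm (from_coords k i j a b) \<alpha>\<^sub>1 = from_coords 0 k 0 i j"
proof -
  have "comm (from_coords k i j a b) \<alpha>\<^sub>1 = \<beta>\<^sub>1 [^] k \<otimes> (\<eta>\<^sub>1\<^sub>1 [^] i \<otimes> (\<eta>\<^sub>2\<^sub>1 [^] j \<otimes> (\<one> [^] a \<otimes> \<one> [^] b)))"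
    unfolding from_coords_def using basis_in_\<gamma>\<^sub>2 \<alpha>\<^sub>1
    by (simp add: comm_mult_A comm_pow_A A_carrier A_mult A_pow comm_central
        \<eta>\<^sub>1\<^sub>1_central \<eta>\<^sub>1\<^sub>2_central del: nat_pow_one)
  then show ?thesis using basis_in_\<gamma>\<^sub>2 A_carrier by (simp add: \<eta>\<^sub>2\<^sub>1_eq from_coords_def)
qed

lemma \<eta>\<^sub>2\<^sub>2_from_coords: "\<eta>\<^sub>2\<^sub>2 = from_coords 0 0 0 m n"
  by (simp add: \<eta>\<^sub>2\<^sub>2_eq basis_from_coords from_coords_mult)

lemma comm_from_coords_\<alpha>\<^sub>2: "comm (from_coords k i j a b) \<alpha>\<^sub>2 = from_coords 0 0 k (m * j) (i + n * j)"
proof -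
  have "comm (from_coords k i j a b) \<alpha>\<^sub>2 = \<beta>\<^sub>2 [^] k \<otimes> (\<eta>\<^sub>1\<^sub>2 [^] i \<otimes> (\<eta>\<^sub>2\<^sub>2 [^] j \<otimes> (\<one> [^] a \<otimes> \<one> [^] b)))"
    unfolding from_coords_def using basis_in_\<gamma>\<^sub>2 \<alpha>\<^sub>2
    by (simp add: comm_mult_A comm_pow_A A_carrier A_mult A_pow comm_central
        \<eta>\<^sub>1\<^sub>1_central \<eta>\<^sub>1\<^sub>2_central del: nat_pow_one)
  then show ?thesis
    by (simp add: \<eta>\<^sub>2\<^sub>2_from_coords basis_from_coords from_coords_pow from_coords_mult mult.commute)
qed


lemma \<gamma>\<^sub>2_eq_from_coords: "\<gamma>\<^sub>2 = {from_coords k i j a b | k i j a b. True}"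
proof
  define V where "V = {from_coords k i j a b | k i j a b. True}"
  have V_I [simp]: "from_coords k i j a b \<in> V" for k i j a b
    unfolding V_def by blast
  have V_E: "\<exists>k i j a b. x = from_coords k i j a b" if "x \<in> V" for x
    using that unfolding V_def by blast
  have mult: "x \<otimes> y \<in> V" if "x \<in> V" "y \<in> V" for x y
    using V_E[OF that(1)] V_E[OF that(2)] by (auto simp: from_coords_mult)
  have conj: "inv s \<otimes> x \<otimes> s \<in> V" if "s \<in> {\<alpha>\<^sub>1, \<alpha>\<^sub>2}" "x \<in> V" for s x
    using that V_E[OF that(2)] \<alpha>\<^sub>1 \<alpha>\<^sub>2
    by (auto simp: conj_eq_mult_comm comm_from_coords_\<alpha>\<^sub>1 comm_from_coords_\<alpha>\<^sub>2 from_coords_mult)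
  have subgroup: "subgroup V G"
  proof (rule finite_submonoid_is_subgroup[OF finite_G _ _ mult])
    show "V \<subseteq> carrier G" unfolding V_def by auto
    show "\<one> \<in> V" using V_I[of 0 0 0 0 0] by simp
  qed
  interpret V: normal V G
    by (rule normalI_generate[OF finite_G generate_\<alpha> subgroup conj])
  have "comm s t \<in> V" if "s \<in> {\<alpha>\<^sub>1, \<alpha>\<^sub>2}" "t \<in> {\<alpha>\<^sub>1, \<alpha>\<^sub>2}" for s t
  proof -
    have "\<beta> = from_coords 1 0 0 0 0" using basis_from_coords(1)[of 1] \<alpha>\<^sub>1 \<alpha>\<^sub>2 by simp
    then have "\<beta> \<in> V" "inv \<beta> \<in> V" by (simp_all add: inv_from_coords)
    then show ?thesis using that \<alpha>\<^sub>1 \<alpha>\<^sub>2 inv_comm subgroup.one_closed[OF subgroup] by auto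
  qed
  then have "center_preimage V = carrier G"
    by (rule V.center_preimage_eq_carrier[OF finite_G generate_\<alpha>])
  then have "\<gamma>\<^sub>2 \<subseteq> V"
    unfolding \<gamma>\<^sub>2_eq comm_subgroup_def
    by (intro generate_subgroup_incl[OF _ subgroup]) (auto simp: center_preimage_def)
  then show "\<gamma>\<^sub>2 \<subseteq> {from_coords k i j a b | k i j a b. True}" unfolding V_def .
qed auto


lemma \<gamma>\<^sub>2_eq_from_coords_image:
  "\<gamma>\<^sub>2 = (\<lambda>(k, i, j, a, b). from_coords k i j a b) ` ({..<p} \<times> {..<p} \<times> {..<p} \<times> {..<p} \<times> {..<p})"
proof -
  have "from_coords k i j a b \<in> (\<lambda>(k, i, j, a, b). from_coords k i j a b) ` ({..<p} \<times> {..<p} \<times> {..<p} \<times> {..<p} \<times> {..<p})"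
    for k i j a b
    using from_coords_mod[of k i j a b] p_gt_1
    by (intro image_eqI[of _ _ "(k mod p, i mod p, j mod p, a mod p, b mod p)"]) auto
  then show ?thesis unfolding \<gamma>\<^sub>2_eq_from_coords by (auto; blast)
qed

lemma inj_on_from_coords:
  "inj_on (\<lambda>(k, i, j, a, b). from_coords k i j a b) ({..<p} \<times> {..<p} \<times> {..<p} \<times> {..<p} \<times> {..<p})"
proof (rule eq_card_imp_inj_on)
  have "card ((\<lambda>(k, i, j, a, b). from_coords k i j a b) ` ({..<p} \<times> {..<p} \<times> {..<p} \<times> {..<p} \<times> {..<p})) = p ^ 5"
    using card_\<gamma>\<^sub>2 \<gamma>\<^sub>2_eq_from_coords_image by metis
  then show "card ((\<lambda>(k, i, j, a, b). from_coords k i j a b) ` ({..<p} \<times> {..<p} \<times> {..<p} \<times> {..<p} \<times> {..<p})) =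
      card ({..<p} \<times> {..<p} \<times> {..<p} \<times> {..<p} \<times> {..<p})"
    by (simp add: card_cartesian_product eval_nat_numeral)
qed simp

lemma from_coords_eq_iff:
  "from_coords k i j a b = from_coords k' i' j' a' b' \<longleftrightarrow>
   [k = k'] (mod p) \<and> [i = i'] (mod p) \<and> [j = j'] (mod p) \<and> [a = a'] (mod p) \<and> [b = b'] (mod p)"
proof
  assume "from_coords k i j a b = from_coords k' i' j' a' b'"
  then have "from_coords (k mod p) (i mod p) (j mod p) (a mod p) (b mod p) =
             from_coords (k' mod p) (i' mod p) (j' mod p) (a' mod p) (b' mod p)"
    by (simp flip: from_coords_mod)
  then show "[k = k'] (mod p) \<and> [i = i'] (mod p) \<and> [j = j'] (mod p) \<and> [a = a'] (mod p) \<and> [b = b'] (mod p)"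
    using inj_onD[OF inj_on_from_coords] p_gt_1 by (fastforce simp: cong_def)
qed (auto intro: from_coords_cong)


text \<open>\<open>\<beta>_coset k\<close> is the coset \<open>\<beta>\<^sup>k \<gamma>\<^sub>3(G)\<close>, the elements of \<open>\<gamma>\<^sub>2\<close> with \<open>\<beta>\<close>-coordinate \<open>k\<close>.\<close>
definition \<beta>_coset :: "nat \<Rightarrow> 'a set" where
  "\<beta>_coset k = {from_coords k i j a b | i j a b. True}"

lemma from_coords_in_\<beta>_coset [simp]: "from_coords k i j a b \<in> \<beta>_coset k"
  unfolding \<beta>_coset_def by blast

lemma \<beta>_cosetE:
  assumes "x \<in> \<beta>_coset k"
  obtains i j a b where "x = from_coords k i j a b"
  using assms unfolding \<beta>_coset_def by blast

lemma \<beta>_coset_mult: "x \<in> \<beta>_coset k \<Longrightarrow> y \<in> \<beta>_coset k' \<Longrightarrow> x \<otimes> y \<in> \<beta>_coset (k + k')"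
  by (auto elim!: \<beta>_cosetE simp: from_coords_mult)

lemma \<beta>_coset_cong: "x \<in> \<beta>_coset k \<Longrightarrow> x \<in> \<beta>_coset k' \<Longrightarrow> [k = k'] (mod p)"
  by (auto elim!: \<beta>_cosetE simp: from_coords_eq_iff)

lemma \<beta>_coset_closed: "x \<in> \<beta>_coset k \<Longrightarrow> x \<in> carrier G"
  by (auto elim: \<beta>_cosetE)

lemma comm_\<gamma>\<^sub>2_in_\<beta>_coset_0:
  assumes "c \<in> \<gamma>\<^sub>2"
  shows "comm c \<alpha>\<^sub>1 \<in> \<beta>_coset 0" and "comm c \<alpha>\<^sub>2 \<in> \<beta>_coset 0"
  using assms by (auto simp: \<gamma>\<^sub>2_eq_from_coords comm_from_coords_\<alpha>\<^sub>1 comm_from_coords_\<alpha>\<^sub>2)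

lemma conj_\<beta>_coset:
  assumes "x \<in> \<beta>_coset k" and "g \<in> carrier G"
  shows "inv g \<otimes> x \<otimes> g \<in> \<beta>_coset k"
proof -
  let ?M = "{g \<in> carrier G. \<forall>k. \<forall>x \<in> \<beta>_coset k. inv g \<otimes> x \<otimes> g \<in> \<beta>_coset k}"
  have "generate G {\<alpha>\<^sub>1, \<alpha>\<^sub>2} \<subseteq> ?M"
  proof (rule generate_subset_finite_submonoid[OF finite_G])
    have "inv \<one> \<otimes> x \<otimes> \<one> = x" if "x \<in> \<beta>_coset k" for x k
      using \<beta>_coset_closed[OF that] by simp
    then show "\<one> \<in> ?M" by auto
    show "g \<otimes> h \<in> ?M" if "g \<in> ?M" "h \<in> ?M" for g h
    proof -
      have "inv (g \<otimes> h) \<otimes> x \<otimes> (g \<otimes> h) = inv h \<otimes> (inv g \<otimes> x \<otimes> g) \<otimes> h"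
        if "x \<in> \<beta>_coset k" for x k
        using that \<open>g \<in> ?M\<close> \<open>h \<in> ?M\<close> \<beta>_coset_closed by (auto simp: m_assoc inv_mult_group)
      then show ?thesis using that by auto
    qed
    have "inv s \<otimes> x \<otimes> s \<in> \<beta>_coset k" if "s \<in> {\<alpha>\<^sub>1, \<alpha>\<^sub>2}" "x \<in> \<beta>_coset k" for s x k
    proof -
      have "comm x s \<in> \<beta>_coset 0"
        using that A_carrier comm_\<gamma>\<^sub>2_in_\<beta>_coset_0[of x] by (auto elim: \<beta>_cosetE)
      then have "x \<otimes> comm x s \<in> \<beta>_coset k" using \<beta>_coset_mult[OF that(2)] by fastforce
      then show ?thesis
        using that \<alpha>\<^sub>1 \<alpha>\<^sub>2 \<beta>_coset_closed conj_eq_mult_comm by auto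
    qed
    then show "{\<alpha>\<^sub>1, \<alpha>\<^sub>2} \<subseteq> ?M" using \<alpha>\<^sub>1 \<alpha>\<^sub>2 by auto
  qed auto
  then show ?thesis using assms generate_\<alpha> by auto
qed

lemma comm_\<alpha>\<^sub>2_pow_\<alpha>\<^sub>1: "comm (\<alpha>\<^sub>2 [^] b) \<alpha>\<^sub>1 \<in> \<beta>_coset ((p - 1) * b)"
proof (induction b)
  case 0
  show ?case using \<alpha>\<^sub>1 from_coords_in_\<beta>_coset[of 0 0 0 0 0] by simp
next
  case (Suc b)
  have "comm \<alpha>\<^sub>2 \<alpha>\<^sub>1 = from_coords (p - 1) 0 0 0 0"
    using inv_comm[OF \<alpha>\<^sub>1 \<alpha>\<^sub>2] basis_from_coords(1)[of 1] \<alpha>\<^sub>1 \<alpha>\<^sub>2 by (simp add: inv_from_coords)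
  then have "comm \<alpha>\<^sub>2 \<alpha>\<^sub>1 \<in> \<beta>_coset (p - 1)" by simp
  then have "(inv \<alpha>\<^sub>2 \<otimes> comm (\<alpha>\<^sub>2 [^] b) \<alpha>\<^sub>1 \<otimes> \<alpha>\<^sub>2) \<otimes> comm \<alpha>\<^sub>2 \<alpha>\<^sub>1 \<in> \<beta>_coset ((p - 1) * b + (p - 1))"
    by (rule \<beta>_coset_mult[OF conj_\<beta>_coset[OF Suc.IH \<alpha>\<^sub>2]])
  moreover have "comm (\<alpha>\<^sub>2 [^] Suc b) \<alpha>\<^sub>1 = (inv \<alpha>\<^sub>2 \<otimes> comm (\<alpha>\<^sub>2 [^] b) \<alpha>\<^sub>1 \<otimes> \<alpha>\<^sub>2) \<otimes> comm \<alpha>\<^sub>2 \<alpha>\<^sub>1"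
    using comm_mult_left[of "\<alpha>\<^sub>2 [^] b" \<alpha>\<^sub>2 \<alpha>\<^sub>1] \<alpha>\<^sub>1 \<alpha>\<^sub>2 by (simp add: nat_pow_Suc)
  moreover have "(p - 1) * Suc b = (p - 1) * b + (p - 1)" by simp
  ultimately show ?case by (simp only:)
qed

lemma comm_\<alpha>\<^sub>1_pow_\<alpha>\<^sub>2: "comm (\<alpha>\<^sub>1 [^] a) \<alpha>\<^sub>2 \<in> \<beta>_coset a"
proof (induction a)
  case 0
  show ?case using \<alpha>\<^sub>2 from_coords_in_\<beta>_coset[of 0 0 0 0 0] by simp
next
  case (Suc a)
  have "\<beta> = from_coords 1 0 0 0 0"
    using basis_from_coords(1)[of 1] \<alpha>\<^sub>1 \<alpha>\<^sub>2 by simp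
  then have "\<beta> \<in> \<beta>_coset 1" by simp
  then have "(inv \<alpha>\<^sub>1 \<otimes> comm (\<alpha>\<^sub>1 [^] a) \<alpha>\<^sub>2 \<otimes> \<alpha>\<^sub>1) \<otimes> \<beta> \<in> \<beta>_coset (a + 1)"
    by (rule \<beta>_coset_mult[OF conj_\<beta>_coset[OF Suc.IH \<alpha>\<^sub>1]])
  then show ?case
    using comm_mult_left[of "\<alpha>\<^sub>1 [^] a" \<alpha>\<^sub>1 \<alpha>\<^sub>2] \<alpha>\<^sub>1 \<alpha>\<^sub>2 by (simp add: nat_pow_Suc)
qed


lemma comm_normal_form_\<alpha>\<^sub>1:
  assumes "c \<in> \<gamma>\<^sub>2"
  shows "comm (\<alpha>\<^sub>1 [^] (a::nat) \<otimes> \<alpha>\<^sub>2 [^] b \<otimes> c) \<alpha>\<^sub>1 \<in> \<beta>_coset ((p - 1) * b)"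
proof -
  have "comm (\<alpha>\<^sub>1 [^] a \<otimes> \<alpha>\<^sub>2 [^] b) \<alpha>\<^sub>1 = comm (\<alpha>\<^sub>2 [^] b) \<alpha>\<^sub>1"
    using \<alpha>\<^sub>1 \<alpha>\<^sub>2 comm_mult_left[of "\<alpha>\<^sub>1 [^] a" "\<alpha>\<^sub>2 [^] b" \<alpha>\<^sub>1] by simp
  then have "comm (\<alpha>\<^sub>1 [^] a \<otimes> \<alpha>\<^sub>2 [^] b \<otimes> c) \<alpha>\<^sub>1 = comm (\<alpha>\<^sub>2 [^] b) \<alpha>\<^sub>1 \<otimes> comm c \<alpha>\<^sub>1"
    using comm_mult_A[OF _ assms \<alpha>\<^sub>1] \<alpha>\<^sub>1 \<alpha>\<^sub>2 by simp
  then show ?thesis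
    using \<beta>_coset_mult[OF comm_\<alpha>\<^sub>2_pow_\<alpha>\<^sub>1 comm_\<gamma>\<^sub>2_in_\<beta>_coset_0(1)[OF assms]] by simp
qed

lemma comm_normal_form_\<alpha>\<^sub>2:
  assumes "c \<in> \<gamma>\<^sub>2"
  shows "comm (\<alpha>\<^sub>1 [^] a \<otimes> \<alpha>\<^sub>2 [^] (b::nat) \<otimes> c) \<alpha>\<^sub>2 \<in> \<beta>_coset a"
proof -
  have "comm (\<alpha>\<^sub>1 [^] a \<otimes> \<alpha>\<^sub>2 [^] b) \<alpha>\<^sub>2 = inv (\<alpha>\<^sub>2 [^] b) \<otimes> comm (\<alpha>\<^sub>1 [^] a) \<alpha>\<^sub>2 \<otimes> \<alpha>\<^sub>2 [^] b"
    using \<alpha>\<^sub>1 \<alpha>\<^sub>2 comm_mult_left[of "\<alpha>\<^sub>1 [^] a" "\<alpha>\<^sub>2 [^] b" \<alpha>\<^sub>2] by simp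
  then have "comm (\<alpha>\<^sub>1 [^] a \<otimes> \<alpha>\<^sub>2 [^] b \<otimes> c) \<alpha>\<^sub>2 =
      (inv (\<alpha>\<^sub>2 [^] b) \<otimes> comm (\<alpha>\<^sub>1 [^] a) \<alpha>\<^sub>2 \<otimes> \<alpha>\<^sub>2 [^] b) \<otimes> comm c \<alpha>\<^sub>2"
    using comm_mult_A[OF _ assms \<alpha>\<^sub>2] \<alpha>\<^sub>1 \<alpha>\<^sub>2 by simp
  then show ?thesis
    using \<beta>_coset_mult[OF conj_\<beta>_coset[OF comm_\<alpha>\<^sub>1_pow_\<alpha>\<^sub>2] comm_\<gamma>\<^sub>2_in_\<beta>_coset_0(2)[OF assms]] \<alpha>\<^sub>2
    by simp
qed

lemma normal_form_unique:
  assumes "a < p" "b < p" "c \<in> \<gamma>\<^sub>2" "a' < p" "b' < p" "c' \<in> \<gamma>\<^sub>2"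
    and eq: "\<alpha>\<^sub>1 [^] a \<otimes> \<alpha>\<^sub>2 [^] b \<otimes> c = \<alpha>\<^sub>1 [^] a' \<otimes> \<alpha>\<^sub>2 [^] b' \<otimes> c'"
  shows "a = a' \<and> b = b' \<and> c = c'"
proof -
  have "[(p - 1) * b = (p - 1) * b'] (mod p)"
    using comm_normal_form_\<alpha>\<^sub>1[OF assms(3), of a b] comm_normal_form_\<alpha>\<^sub>1[OF assms(6), of a' b']
    unfolding eq by (rule \<beta>_coset_cong)
  then have "[b = b'] (mod p)" using cong_mult_lcancel_nat[OF coprime_p_minus_1] by blast
  then have b: "b = b'" using assms cong_less_modulus_unique_nat by blast
  have "[a = a'] (mod p)"
    using comm_normal_form_\<alpha>\<^sub>2[OF assms(3), of a b] comm_normal_form_\<alpha>\<^sub>2[OF assms(6), of a' b']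
    unfolding eq by (rule \<beta>_coset_cong)
  then have a: "a = a'" using assms cong_less_modulus_unique_nat by blast
  have "c = c'" using eq assms(3,6) A_carrier \<alpha>\<^sub>1 \<alpha>\<^sub>2 by (simp add: a b m_assoc)
  with a b show ?thesis by blast
qed

lemma normal_form_exists:
  assumes "x \<in> carrier G"
  obtains a b c where "a < p" "b < p" "c \<in> \<gamma>\<^sub>2" "x = \<alpha>\<^sub>1 [^] a \<otimes> \<alpha>\<^sub>2 [^] b \<otimes> c"
proof -
  let ?f = "\<lambda>(a::nat, b::nat, c). \<alpha>\<^sub>1 [^] a \<otimes> \<alpha>\<^sub>2 [^] b \<otimes> c" and ?D = "{..<p} \<times> {..<p} \<times> \<gamma>\<^sub>2"
  have "inj_on ?f ?D"
    using normal_form_unique by (intro inj_onI) auto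
  moreover have "p * (p * p ^ 5) = p ^ 7" by (simp add: eval_nat_numeral)
  ultimately have "card (?f ` ?D) = p ^ 7"
    by (simp add: card_image card_cartesian_product card_\<gamma>\<^sub>2)
  moreover have "?f ` ?D \<subseteq> carrier G" using \<alpha>\<^sub>1 \<alpha>\<^sub>2 A_carrier by auto
  ultimately have "?f ` ?D = carrier G"
    using card_G finite_G by (intro card_seteq) simp_all
  then have "x \<in> ?f ` ?D" using assms by simp
  then show ?thesis using that by auto
qed

lemma mem_\<gamma>\<^sub>2I:
  assumes "x \<in> carrier G" and "comm x \<alpha>\<^sub>1 \<in> \<beta>_coset 0" and "comm x \<alpha>\<^sub>2 \<in> \<beta>_coset 0"
  shows "x \<in> \<gamma>\<^sub>2"
proof -
  obtain a b c where abc: "a < p" "b < p" "c \<in> \<gamma>\<^sub>2" and x: "x = \<alpha>\<^sub>1 [^] a \<otimes> \<alpha>\<^sub>2 [^] b \<otimes> c"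
    using normal_form_exists[OF assms(1)] .
  have "[(p - 1) * b = (p - 1) * 0] (mod p)"
    using \<beta>_coset_cong[OF comm_normal_form_\<alpha>\<^sub>1[OF abc(3)]] assms(2) x by simp
  then have "[b = 0] (mod p)" using cong_mult_lcancel_nat[OF coprime_p_minus_1] by blast
  then have "b = 0" using abc cong_less_modulus_unique_nat p_gt_1 by simp
  moreover have "[a = 0] (mod p)"
    using \<beta>_coset_cong[OF comm_normal_form_\<alpha>\<^sub>2[OF abc(3)]] assms(3) x by simp
  then have "a = 0" using abc cong_less_modulus_unique_nat p_gt_1 by blast
  ultimately show ?thesis using x abc A_carrier by simp
qed


lemma from_coords_central: "from_coords 0 0 0 a b \<in> grp_center G"
proof -
  have "from_coords 0 0 0 a b = \<eta>\<^sub>1\<^sub>1 [^] a \<otimes> \<eta>\<^sub>1\<^sub>2 [^] b"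
    using basis_in_\<gamma>\<^sub>2 A_carrier by (simp add: from_coords_def)
  then show ?thesis
    using subgroup_grp_center \<eta>\<^sub>1\<^sub>1_central \<eta>\<^sub>1\<^sub>2_central
    by (simp add: subgroup.m_closed subgroup_nat_pow_closed)
qed

lemma central_from_coords:
  assumes "z \<in> grp_center G"
  obtains a b where "z = from_coords 0 0 0 a b"
proof -
  have zG: "z \<in> carrier G" using assms by (simp add: grp_center_def)
  have comm_z: "comm z \<alpha>\<^sub>1 = from_coords 0 0 0 0 0" "comm z \<alpha>\<^sub>2 = from_coords 0 0 0 0 0"
    using comm_central[OF assms] \<alpha>\<^sub>1 \<alpha>\<^sub>2 by simp_all
  have "z \<in> \<gamma>\<^sub>2"
    using mem_\<gamma>\<^sub>2I[OF zG] from_coords_in_\<beta>_coset[of 0 0 0 0 0] unfolding comm_z by blast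
  then obtain k i j a b where z: "z = from_coords k i j a b"
    by (auto simp: \<gamma>\<^sub>2_eq_from_coords)
  then have "[k = 0] (mod p) \<and> [i = 0] (mod p) \<and> [j = 0] (mod p)"
    using comm_z(1) by (simp add: comm_from_coords_\<alpha>\<^sub>1 from_coords_eq_iff del: from_coords_zero)
  then have "z = from_coords 0 0 0 a b"
    unfolding z by (intro from_coords_cong) auto
  then show ?thesis using that by blast
qed

lemma card_grp_center_le: "card (grp_center G) \<le> p\<^sup>2"
proof -
  have "grp_center G \<subseteq> (\<lambda>(a, b). from_coords 0 0 0 a b) ` ({..<p} \<times> {..<p})"
  proof
    fix z assume "z \<in> grp_center G"
    then obtain a b where "z = from_coords 0 0 0 a b" by (rule central_from_coords)
    then have "z = from_coords 0 0 0 (a mod p) (b mod p)" using from_coords_mod[of 0 0 0 a b] by simp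
    then show "z \<in> (\<lambda>(a, b). from_coords 0 0 0 a b) ` ({..<p} \<times> {..<p})"
      using p_gt_1 by auto
  qed
  then have "card (grp_center G) \<le> card ((\<lambda>(a, b). from_coords 0 0 0 a b) ` ({..<p} \<times> {..<p}))"
    by (intro card_mono) simp_all
  also have "\<dots> \<le> card ({..<p} \<times> {..<p})"
    by (rule card_image_le) simp
  finally show ?thesis by (simp add: card_cartesian_product power2_eq_square)
qed

lemma center_preimageE:
  assumes "H \<subseteq> grp_center G" and x: "x \<in> center_preimage H"
  obtains i j a b where "x = from_coords 0 i j a b"
proof -
  have xG: "x \<in> carrier G" using x by (simp add: center_preimage_def)
  have "comm x \<alpha>\<^sub>1 \<in> grp_center G" "comm x \<alpha>\<^sub>2 \<in> grp_center G"
    using x assms(1) \<alpha>\<^sub>1 \<alpha>\<^sub>2 by (auto simp: center_preimage_def)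
  then obtain a1 b1 a2 b2 where central:
    "comm x \<alpha>\<^sub>1 = from_coords 0 0 0 a1 b1" "comm x \<alpha>\<^sub>2 = from_coords 0 0 0 a2 b2"
    by (metis central_from_coords)
  then have "x \<in> \<gamma>\<^sub>2" using mem_\<gamma>\<^sub>2I[OF xG] by simp
  then obtain k i j a b where x_eq: "x = from_coords k i j a b"
    by (auto simp: \<gamma>\<^sub>2_eq_from_coords)
  then have "[k = 0] (mod p)"
    using central(1) by (simp add: comm_from_coords_\<alpha>\<^sub>1 from_coords_eq_iff del: from_coords_zero)
  then have "x = from_coords 0 i j a b"
    unfolding x_eq by (auto intro: from_coords_cong)
  then show ?thesis using that by blast
qed

lemma center_preimage_eq:
  assumes "subgroup H G" and "H \<subseteq> grp_center G"
  shows "center_preimage H = {from_coords 0 i j a b | i j a b.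
           from_coords 0 0 0 i j \<in> H \<and> from_coords 0 0 0 (m * j) (i + n * j) \<in> H}"
proof
  interpret H: normal H G using central_subgroup_normal[OF assms] .
  show "center_preimage H \<subseteq> {from_coords 0 i j a b | i j a b.
      from_coords 0 0 0 i j \<in> H \<and> from_coords 0 0 0 (m * j) (i + n * j) \<in> H}"
  proof
    fix x assume x: "x \<in> center_preimage H"
    then obtain i j a b where x_eq: "x = from_coords 0 i j a b"
      using center_preimageE[OF assms(2)] by blast
    have "comm x \<alpha>\<^sub>1 \<in> H" "comm x \<alpha>\<^sub>2 \<in> H"
      using x \<alpha>\<^sub>1 \<alpha>\<^sub>2 by (auto simp: center_preimage_def)
    then show "x \<in> {from_coords 0 i j a b | i j a b.
        from_coords 0 0 0 i j \<in> H \<and> from_coords 0 0 0 (m * j) (i + n * j) \<in> H}"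
      unfolding x_eq comm_from_coords_\<alpha>\<^sub>1 comm_from_coords_\<alpha>\<^sub>2 by auto
  qed
  show "{from_coords 0 i j a b | i j a b.
      from_coords 0 0 0 i j \<in> H \<and> from_coords 0 0 0 (m * j) (i + n * j) \<in> H} \<subseteq> center_preimage H"
  proof
    fix x assume "x \<in> {from_coords 0 i j a b | i j a b.
      from_coords 0 0 0 i j \<in> H \<and> from_coords 0 0 0 (m * j) (i + n * j) \<in> H}"
    then obtain i j a b where x: "x = from_coords 0 i j a b"
      and H: "from_coords 0 0 0 i j \<in> H" "from_coords 0 0 0 (m * j) (i + n * j) \<in> H"
      by blast
    show "x \<in> center_preimage H"
    proof (rule H.center_preimageI[OF finite_G generate_\<alpha>])
      show "x \<in> carrier G" using x by simp
      show "comm x s \<in> H" if "s \<in> {\<alpha>\<^sub>1, \<alpha>\<^sub>2}" for s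
        using that H x by (auto simp: comm_from_coords_\<alpha>\<^sub>1 comm_from_coords_\<alpha>\<^sub>2)
    qed
  qed
qed


lemma coprime_p_if_not_dvd: "\<not> p dvd x \<Longrightarrow> coprime x p"
  using prime_imp_coprime[OF prime_p] coprime_commute by blast

definition central_line :: "nat \<Rightarrow> nat \<Rightarrow> 'a set" where
  "central_line i j = (\<lambda>c. from_coords 0 0 0 (c * i) (c * j)) ` {..<p}"

lemma mem_central_line_iff:
  "from_coords 0 0 0 a b \<in> central_line i j \<longleftrightarrow> (\<exists>c. [a = c * i] (mod p) \<and> [b = c * j] (mod p))"
proof
  assume "from_coords 0 0 0 a b \<in> central_line i j"
  then obtain c where "from_coords 0 0 0 a b = from_coords 0 0 0 (c * i) (c * j)"
    by (auto simp: central_line_def)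
  then show "\<exists>c. [a = c * i] (mod p) \<and> [b = c * j] (mod p)"
    by (auto simp: from_coords_eq_iff)
next
  assume "\<exists>c. [a = c * i] (mod p) \<and> [b = c * j] (mod p)"
  then obtain c where "[a = c * i] (mod p)" "[b = c * j] (mod p)" by blast
  then have "from_coords 0 0 0 a b = from_coords 0 0 0 (c mod p * i) (c mod p * j)"
    by (intro from_coords_cong) (simp_all add: cong_def mod_mult_left_eq)
  then show "from_coords 0 0 0 a b \<in> central_line i j"
    using p_gt_1 by (auto simp: central_line_def)
qed

lemma central_line_subset:
  assumes "subgroup H G" and "from_coords 0 0 0 i j \<in> H"
  shows "central_line i j \<subseteq> H"
  using subgroup_nat_pow_closed[OF assms] by (auto simp: central_line_def from_coords_pow)

lemma central_line_subset_center: "central_line i j \<subseteq> grp_center G"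
  using from_coords_central by (auto simp: central_line_def)

lemma subgroup_central_line: "subgroup (central_line i j) G"
proof (rule finite_submonoid_is_subgroup[OF finite_G])
  show "central_line i j \<subseteq> carrier G" by (auto simp: central_line_def)
  show "\<one> \<in> central_line i j"
    using mem_central_line_iff[of 0 0 i j] by (auto intro: exI[of _ 0])
  fix x y assume "x \<in> central_line i j" "y \<in> central_line i j"
  then obtain c d where "x = from_coords 0 0 0 (c * i) (c * j)" "y = from_coords 0 0 0 (d * i) (d * j)"
    by (auto simp: central_line_def)
  then show "x \<otimes> y \<in> central_line i j"
    by (auto simp: from_coords_mult mem_central_line_iff add_mult_distrib intro: exI[of _ "c + d"])
qed

lemma card_central_line:
  assumes "\<not> (p dvd i \<and> p dvd j)"
  shows "card (central_line i j) = p"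
proof -
  have "inj_on (\<lambda>c. from_coords 0 0 0 (c * i) (c * j)) {..<p}"
  proof (rule inj_onI)
    fix c c' assume c: "c \<in> {..<p}" "c' \<in> {..<p}"
      and "from_coords 0 0 0 (c * i) (c * j) = from_coords 0 0 0 (c' * i) (c' * j)"
    then have "[c * i = c' * i] (mod p)" "[c * j = c' * j] (mod p)"
      by (simp_all add: from_coords_eq_iff)
    then have "[c = c'] (mod p)"
      using assms cong_mult_rcancel_nat coprime_p_if_not_dvd by blast
    then show "c = c'" using c cong_less_modulus_unique_nat by auto
  qed
  then show ?thesis by (simp add: central_line_def card_image)
qed

lemma central_subgroup_eq_central_line:
  assumes "subgroup H G" and "card H = p"
    and "from_coords 0 0 0 i j \<in> H" and "\<not> (p dvd i \<and> p dvd j)"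
  shows "H = central_line i j"
proof -
  have "finite H" using finite_subset[OF subgroup.subset[OF assms(1)] finite_G] .
  then show ?thesis
    using central_line_subset[OF assms(1,3)] card_central_line[OF assms(4)] assms(2)
    by (intro card_seteq[symmetric]) simp_all
qed


lemma eigenvector_if_center_quotient:
  assumes H: "subgroup H G" "H \<subseteq> grp_center G"
    and card_H: "card H = p" and card_Z: "card (grp_center (G Mod H)) = p\<^sup>2"
  shows "\<exists>i j. \<not> p dvd j \<and> cong_eigenvector p m n i j"
proof -
  interpret H: normal H G using central_subgroup_normal[OF H] .
  have "card (center_preimage H) = p\<^sup>2 * p"
    using H.card_grp_center_FactGroup[OF finite_G] card_H card_Z by simp
  then have "card (grp_center G) < card (center_preimage H)"
    using card_grp_center_le p_gt_1 by (simp add: le_less_trans)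
  moreover have "finite (grp_center G)"
    using finite_G by (rule finite_subset[rotated]) (auto simp: grp_center_def)
  ultimately have "\<not> center_preimage H \<subseteq> grp_center G"
    using card_mono by (metis not_le)
  then obtain x where "x \<in> center_preimage H" and x_noncentral: "x \<notin> grp_center G"
    by blast
  then obtain i j a b where x: "x = from_coords 0 i j a b" and
    line: "from_coords 0 0 0 i j \<in> H" "from_coords 0 0 0 (m * j) (i + n * j) \<in> H"
    using center_preimage_eq[OF H] by blast
  have nonzero: "\<not> (p dvd i \<and> p dvd j)"
  proof
    assume "p dvd i \<and> p dvd j"
    then have "x = from_coords 0 0 0 a b" unfolding x by (intro from_coords_cong) (simp_all add: cong_0_iff)
    then show False using x_noncentral from_coords_central by simp
  qed
  have "H = central_line i j"
    by (rule central_subgroup_eq_central_line[OF H(1) card_H line(1) nonzero])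
  then have eigen: "cong_eigenvector p m n i j"
    using line(2) by (simp add: mem_central_line_iff cong_eigenvector_def)
  then have "\<not> p dvd j" using nonzero cong_eigenvector_dvd_fst by blast
  with eigen show ?thesis by blast
qed

lemma center_preimage_central_line:
  assumes j: "\<not> p dvd j" and eigen: "cong_eigenvector p m n i j"
  shows "center_preimage (central_line i j) =
         (\<lambda>(c, a, b). from_coords 0 (c * i) (c * j) a b) ` ({..<p} \<times> {..<p} \<times> {..<p})"
    (is "_ = ?f ` ?D")
proof
  show "center_preimage (central_line i j) \<subseteq> ?f ` ?D"
  proof
    fix x assume "x \<in> center_preimage (central_line i j)"
    then obtain i' j' a b where x: "x = from_coords 0 i' j' a b"
      and "from_coords 0 0 0 i' j' \<in> central_line i j"
      using center_preimage_eq[OF subgroup_central_line central_line_subset_center] by blast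
    then obtain c where "[i' = c * i] (mod p)" "[j' = c * j] (mod p)"
      by (auto simp: mem_central_line_iff)
    then have "x = ?f (c mod p, a mod p, b mod p)"
      unfolding x by (auto intro: from_coords_cong simp: cong_def mod_mult_left_eq)
    then show "x \<in> ?f ` ?D"
      using p_gt_1 by (auto intro!: image_eqI[of _ _ "(c mod p, a mod p, b mod p)"])
  qed
  show "?f ` ?D \<subseteq> center_preimage (central_line i j)"
  proof
    fix x assume "x \<in> ?f ` ?D"
    then obtain c a b where x: "x = from_coords 0 (c * i) (c * j) a b" by auto
    obtain d where d: "[m * j = d * i] (mod p)" "[i + n * j = d * j] (mod p)"
      using eigen by (auto simp: cong_eigenvector_def)
    have "[m * (c * j) = d * c * i] (mod p)" "[c * i + n * (c * j) = d * c * j] (mod p)"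
      using cong_scalar_left[OF d(1), of c] cong_scalar_left[OF d(2), of c]
      by (simp_all add: algebra_simps)
    then have "from_coords 0 0 0 (m * (c * j)) (c * i + n * (c * j)) \<in> central_line i j"
      by (auto simp: mem_central_line_iff)
    moreover have "from_coords 0 0 0 (c * i) (c * j) \<in> central_line i j"
      unfolding mem_central_line_iff by (blast intro: cong_refl)
    ultimately show "x \<in> center_preimage (central_line i j)"
      unfolding x center_preimage_eq[OF subgroup_central_line central_line_subset_center] by blast
  qed
qed

lemma card_grp_center_Mod_central_line:
  assumes j: "\<not> p dvd j" and eigen: "cong_eigenvector p m n i j"
  shows "card (grp_center (G Mod central_line i j)) = p\<^sup>2"
proof -
  interpret L: normal "central_line i j" G
    using central_subgroup_normal[OF subgroup_central_line central_line_subset_center] .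
  let ?f = "\<lambda>(c, a, b). from_coords 0 (c * i) (c * j) a b" and ?D = "{..<p} \<times> {..<p} \<times> {..<p}"
  have "inj_on ?f ?D"
  proof (rule inj_onI)
    fix x y assume "x \<in> ?D" "y \<in> ?D" and eq: "?f x = ?f y"
    then obtain c a b c' a' b' where xy: "x = (c, a, b)" "y = (c', a', b')"
      and bounds: "c < p" "a < p" "b < p" "c' < p" "a' < p" "b' < p" by auto
    then have "[c * j = c' * j] (mod p)" "[a = a'] (mod p)" "[b = b'] (mod p)"
      using eq by (simp_all add: from_coords_eq_iff)
    then have "[c = c'] (mod p)" "[a = a'] (mod p)" "[b = b'] (mod p)"
      using cong_mult_rcancel_nat[OF coprime_p_if_not_dvd[OF j]] by simp_all
    then show "x = y" using xy bounds cong_less_modulus_unique_nat by blast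
  qed
  then have "card (center_preimage (central_line i j)) = p\<^sup>2 * p"
    unfolding center_preimage_central_line[OF assms]
    by (simp add: card_image card_cartesian_product power2_eq_square)
  then show ?thesis
    using L.card_grp_center_FactGroup[OF finite_G] card_central_line[of i j] j p_gt_1 by simp
qed

theorem exists_central_subgroup_iff_eigenvector:
  "(\<exists>H. subgroup H G \<and> H \<subseteq> grp_center G \<and> card H = p \<and> card (grp_center (G Mod H)) = p\<^sup>2)
   \<longleftrightarrow> (\<exists>i j. \<not> p dvd j \<and> cong_eigenvector p m n i j)"
proof
  assume "\<exists>H. subgroup H G \<and> H \<subseteq> grp_center G \<and> card H = p \<and> card (grp_center (G Mod H)) = p\<^sup>2"
  then show "\<exists>i j. \<not> p dvd j \<and> cong_eigenvector p m n i j"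
    using eigenvector_if_center_quotient by blast
next
  assume "\<exists>i j. \<not> p dvd j \<and> cong_eigenvector p m n i j"
  then obtain i j where "\<not> p dvd j" "cong_eigenvector p m n i j" by blast
  then show "\<exists>H. subgroup H G \<and> H \<subseteq> grp_center G \<and> card H = p \<and> card (grp_center (G Mod H)) = p\<^sup>2"
    using subgroup_central_line central_line_subset_center card_central_line
      card_grp_center_Mod_central_line by blast
qed

end

theorem lemma4p2:
  fixes G (structure) and p :: nat and a1 a2 :: 'a and m n :: nat
  assumes "group G" and "Factorial_Ring.prime p"
    and "finite (carrier G)" and "card (carrier G) = p ^ 7"
    and "nilpotency_class G 4"
    and "elem_abelian G p (lower_central G 2)"
    and "card (lower_central G 2) = p ^ 5"
    and "a1 \<in> carrier G" and "a2 \<in> carrier G"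
    and "generate G {a1, a2} = carrier G"
    and "lower_central G 4 =
           generate G {grp_comm G (grp_comm G (grp_comm G a1 a2) a1) a1,
                       grp_comm G (grp_comm G (grp_comm G a1 a2) a1) a2}"
    and "m < p" and "n < p" and "m \<noteq> 0 \<or> n \<noteq> 0"
    and "grp_comm G (grp_comm G (grp_comm G a1 a2) a2) a2 =
           grp_comm G (grp_comm G (grp_comm G a1 a2) a1) a1 [^] m \<otimes>
           grp_comm G (grp_comm G (grp_comm G a1 a2) a1) a2 [^] n"
  shows "(\<exists>H. subgroup H G \<and> H \<subseteq> grp_center G \<and> card H = p \<and>
              card (grp_center (G Mod H)) = p ^ 2)
     \<longleftrightarrow> (\<exists>l u :: int. 0 < l \<and> l < int p \<and> 0 \<le> u \<and> u < int p \<and>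
              (int m * l ^ 2 + int n * l * u - u ^ 2) mod int p = 0)"
proof -
  have "lower_central G 5 = {\<one>}"
    using assms(5) by (simp add: nilpotency_class_def eval_nat_numeral)
  then interpret class4_p7_group G p a1 a2 m n
    using assms by (intro class4_p7_group.intro class4_p7_group_axioms.intro) auto
  have "0 < p" using p_gt_1 by simp
  have "(\<exists>i j. \<not> p dvd j \<and> cong_eigenvector p m n i j) \<longleftrightarrow>
        (\<exists>i j. \<not> p dvd j \<and> [int m * (int j)\<^sup>2 - int n * int j * int i - (int i)\<^sup>2 = 0] (mod int p))"
    using cong_eigenvector_iff_quadratic[OF prime_p] by blast
  then show ?thesis
    unfolding exists_central_subgroup_iff_eigenvector exists_quadratic_root_iff[OF \<open>0 < p\<close>] .
qed

end
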